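(* Let $G$ be a biconnected series-parallel graph without transitive edges, let $(s,t)$ be a separation pair of $G$ and $G'$ a component of $G$ with respect to $(s,t)$. Then $G'$ is heavy if and only if a longest $s$–$t$ path in $G'$ has length (number of edges) at least four.
   Context: A biconnected graph is series-parallel if it contains no subdivision of $K_4$. A separation pair of a biconnected graph $G$ is a pair $(s,t)$ of vertices with $G-s-t$ disconnected; a transitive edge is an edge joining the two vertices of a separation pair. A component w.r.t. $(s,t)$ is the subgraph induced by $s$, $t$ and the vertex set of one connected component of $G-s-t$; vertices other than $s,t$ are internal. A component is heavy if it has an internal vertex adjacent to neither $s$ nor $t$, and light otherwise. *)

theory Defs
  imports Main
begin

definition graph :: "'a set \<Rightarrow> ('a \<times> 'a) set \<Rightarrow> bool" where
  "graph V E \<longleftrightarrow> finite V \<and> E \<subseteq> V \<times> V \<and> sym E \<and> irrefl E"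

definition path_in :: "('a \<times> 'a) set \<Rightarrow> 'a set \<Rightarrow> 'a list \<Rightarrow> bool" where
  "path_in E S p \<longleftrightarrow> p \<noteq> [] \<and> distinct p \<and> set p \<subseteq> S \<and>
     (\<forall>i < length p - 1. (p ! i, p ! Suc i) \<in> E)"

definition connected_on :: "('a \<times> 'a) set \<Rightarrow> 'a set \<Rightarrow> bool" where
  "connected_on E S \<longleftrightarrow> (\<forall>x\<in>S. \<forall>y\<in>S. \<exists>p. path_in E S p \<and> hd p = x \<and> last p = y)"

definition biconnected :: "'a set \<Rightarrow> ('a \<times> 'a) set \<Rightarrow> bool" where
  "biconnected V E \<longleftrightarrow> graph V E \<and> card V \<ge> 3 \<and> connected_on E V \<and>
     (\<forall>v\<in>V. connected_on E (V - {v}))"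

text \<open>G contains a subdivision of K4: four distinct branch vertices b 0..b 3 and six
  paths P i j (i < j) between them that are internally vertex-disjoint and avoid the other
  branch vertices.\<close>
definition has_K4_subdivision :: "'a set \<Rightarrow> ('a \<times> 'a) set \<Rightarrow> bool" where
  "has_K4_subdivision V E \<longleftrightarrow>
     (\<exists>(b :: nat \<Rightarrow> 'a) (P :: nat \<Rightarrow> nat \<Rightarrow> 'a list).
        inj_on b {0..<4} \<and> b ` {0..<4} \<subseteq> V \<and>
        (\<forall>i j. i < j \<and> j < 4 \<longrightarrow>
            path_in E V (P i j) \<and> hd (P i j) = b i \<and> last (P i j) = b j \<and>
            set (P i j) \<inter> b ` {0..<4} = {b i, b j}) \<and>
        (\<forall>i j k l. i < j \<and> j < 4 \<and> k < l \<and> l < 4 \<and> (i, j) \<noteq> (k, l) \<longrightarrow>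
            set (P i j) \<inter> set (P k l) \<subseteq> b ` {0..<4}))"

definition series_parallel :: "'a set \<Rightarrow> ('a \<times> 'a) set \<Rightarrow> bool" where
  "series_parallel V E \<longleftrightarrow> biconnected V E \<and> \<not> has_K4_subdivision V E"

definition separation_pair :: "'a set \<Rightarrow> ('a \<times> 'a) set \<Rightarrow> 'a \<Rightarrow> 'a \<Rightarrow> bool" where
  "separation_pair V E s t \<longleftrightarrow> s \<in> V \<and> t \<in> V \<and> s \<noteq> t \<and> \<not> connected_on E (V - {s, t})"

definition transitive_edge :: "'a set \<Rightarrow> ('a \<times> 'a) set \<Rightarrow> 'a \<Rightarrow> 'a \<Rightarrow> bool" where
  "transitive_edge V E s t \<longleftrightarrow> (s, t) \<in> E \<and> separation_pair V E s t"

definition conn_component :: "('a \<times> 'a) set \<Rightarrow> 'a set \<Rightarrow> 'a set \<Rightarrow> bool" where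
  "conn_component E S C \<longleftrightarrow> C \<subseteq> S \<and> C \<noteq> {} \<and> connected_on E C \<and>
     (\<forall>x\<in>C. \<forall>y\<in>S. (x, y) \<in> E \<longrightarrow> y \<in> C)"

text \<open>W is the vertex set of a component w.r.t. (s,t); the component itself is the
  subgraph induced by W, i.e. (W, E \<inter> W \<times> W).\<close>
definition component :: "'a set \<Rightarrow> ('a \<times> 'a) set \<Rightarrow> 'a \<Rightarrow> 'a \<Rightarrow> 'a set \<Rightarrow> bool" where
  "component V E s t W \<longleftrightarrow> (\<exists>C. conn_component E (V - {s, t}) C \<and> W = {s, t} \<union> C)"

definition heavy :: "('a \<times> 'a) set \<Rightarrow> 'a \<Rightarrow> 'a \<Rightarrow> 'a set \<Rightarrow> bool" where
  "heavy E s t W \<longleftrightarrow> (\<exists>v \<in> W - {s, t}. (v, s) \<notin> E \<and> (v, t) \<notin> E)"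

definition longest_path_length :: "('a \<times> 'a) set \<Rightarrow> 'a set \<Rightarrow> 'a \<Rightarrow> 'a \<Rightarrow> nat" where
  "longest_path_length F W s t =
     Max {length p - 1 | p. path_in F W p \<and> hd p = s \<and> last p = t}"

end

(* If x is an internal vertex of the component, 2-connectivity puts x on an s-t path:
   follow a path from s back to x and, whenever the next vertex u is not on the current s-t
   path p, reroute p through u, splicing in next to the previous vertex v a path from u to p
   that avoids v.  Such a path stays inside the component, and if x is adjacent to neither s
   nor t it has at least four edges.

   Conversely, let s v1 v2 ... w2 w1 t be a path with at least four edges in a light
   component and q an s-t path through another component.  An edge v2 s is impossible: it is
   not transitive, so some path from v1 avoiding s and v2 returns to the tail of the path, and
   with q this yields a subdivision of K4 with branch vertices s, v1, v2 and the return point.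
   Symmetrically w2 t is not an edge.  Lightness then makes v2 t and w2 s edges, two crossing
   chords of the cycle formed with q, which again gives a subdivision of K4. *)

theory Submission
  imports Defs
begin

section \<open>Simple paths\<close>

lemma path_in_iff:
  "path_in E S p \<longleftrightarrow> p \<noteq> [] \<and> distinct p \<and> set p \<subseteq> S \<and> successively (\<lambda>x y. (x, y) \<in> E) p"
  unfolding path_in_def successively_conv_nth by auto

lemma path_in_singleton [simp]: "path_in E S [x] \<longleftrightarrow> x \<in> S"
  by (simp add: path_in_iff)

lemma path_in_Cons:
  "path_in E S (x # p) \<longleftrightarrow> x \<in> S \<and> x \<notin> set p \<and> (p = [] \<or> path_in E S p \<and> (x, hd p) \<in> E)"
  by (cases p) (auto simp: path_in_iff)

lemma path_in_append:
  "path_in E S (p @ q) \<longleftrightarrow>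
     (p = [] \<and> path_in E S q) \<or> (q = [] \<and> path_in E S p) \<or>
     (path_in E S p \<and> path_in E S q \<and> set p \<inter> set q = {} \<and> (last p, hd q) \<in> E)"
  by (auto simp: path_in_iff successively_append_iff)

lemma path_in_rev: "sym E \<Longrightarrow> path_in E S (rev p) \<longleftrightarrow> path_in E S p"
  by (auto simp: path_in_iff sym_def elim!: successively_mono)

lemma path_in_mono: "path_in E S p \<Longrightarrow> S \<subseteq> T \<Longrightarrow> path_in E T p"
  by (auto simp: path_in_iff)

lemma path_in_subset_iff: "S \<subseteq> T \<Longrightarrow> path_in E S p \<longleftrightarrow> path_in E T p \<and> set p \<subseteq> S"
  by (auto simp: path_in_iff)

lemma path_in_Int_Times: "path_in (E \<inter> S \<times> S) S p \<longleftrightarrow> path_in E S p"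
  by (auto simp: path_in_iff elim!: successively_mono)

lemma path_in_infix: "path_in E S (xs @ ys @ zs) \<Longrightarrow> ys \<noteq> [] \<Longrightarrow> path_in E S ys"
  by (auto simp: path_in_append)

lemma path_in_join:
  assumes "path_in E S p" "path_in E S q" "last p = hd q" "set p \<inter> set q = {hd q}"
  shows "path_in E S (p @ tl q)"
  using assms by (cases q; cases "tl q") (auto simp: path_in_append path_in_Cons)

lemma path_in_reroute:
  assumes "path_in E V (p1 @ u # q1 @ y # q2)" "path_in E (V - set (p1 @ u # q1 @ y # q2)) Q"
    and "(u, hd Q) \<in> E" "(last Q, y) \<in> E"
  shows "path_in E V (p1 @ u # Q @ y # q2)"
proof -
  have "path_in E V Q" "set Q \<inter> set (p1 @ u # q1 @ y # q2) = {}" "Q \<noteq> []"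
    using assms(2) by (auto simp: path_in_iff)
  moreover have "path_in E V (p1 @ [u])" "path_in E V (y # q2)"
    using assms(1) by (auto simp: path_in_append path_in_Cons)
  moreover have "set p1 \<inter> set (y # q2) = {}" "u \<notin> set (y # q2)"
    using assms(1) by (auto simp: path_in_iff)
  ultimately show ?thesis
    using assms(3,4) by (auto simp: path_in_append path_in_Cons)
qed

lemma path_in_interior:
  assumes "path_in E V p" "hd p = s" "last p = t" "x \<in> set p" "x \<noteq> s" "x \<noteq> t"
  obtains m where "p = s # m @ [t]" "x \<in> set m" "path_in E (V - {s, t}) m"
proof -
  obtain p1 p2 where p: "p = p1 @ x # p2"
    using split_list assms(4) by metis
  obtain p1' where "p1 = s # p1'"
    using assms(2,5) p by (cases p1) auto
  moreover obtain p2' where "p2 = p2' @ [t]"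
    using assms(3,6) p by (cases p2 rule: rev_cases) auto
  ultimately have p': "p = s # (p1' @ x # p2') @ [t]"
    using p by simp
  then have "path_in E V (p1' @ x # p2')" "s \<notin> set (p1' @ x # p2')" "t \<notin> set (p1' @ x # p2')"
    using assms(1) by (auto simp: path_in_Cons path_in_append)
  then show thesis
    using that[OF p'] by (auto simp: path_in_iff)
qed

lemma length_path_in_through_non_neighbour:
  assumes "sym E" "path_in E V p" "hd p = s" "last p = t" "x \<in> set p" "x \<notin> {s, t}"
    and "(x, s) \<notin> E" "(x, t) \<notin> E"
  shows "5 \<le> length p"
proof -
  obtain m where p: "p = s # m @ [t]" and "x \<in> set m" and "path_in E (V - {s, t}) m"
    using path_in_interior assms(2-6) by (metis insert_iff)
  obtain m1 m2 where m: "m = m1 @ x # m2"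
    using split_list \<open>x \<in> set m\<close> by metis
  have "m1 \<noteq> []"
  proof
    assume "m1 = []"
    then have "(s, x) \<in> E"
      using assms(2) p m by (simp add: path_in_Cons)
    then show False
      using assms(1,7) by (auto simp: sym_def)
  qed
  moreover have "m2 \<noteq> []"
  proof
    assume "m2 = []"
    then have "(x, t) \<in> E"
      using assms(2) p m path_in_append[of E V "s # m1 @ [x]" "[t]"] by simp
    then show False
      using assms(8) by simp
  qed
  ultimately show ?thesis
    using p m by (cases m1; cases m2) auto
qed

lemma connected_on_path_in:
  "connected_on E S \<Longrightarrow> x \<in> S \<Longrightarrow> y \<in> S \<Longrightarrow> \<exists>p. path_in E S p \<and> hd p = x \<and> last p = y"
  unfolding connected_on_def by blast

lemma path_in_first_hit:
  assumes "path_in E S R" "hd R \<notin> X" "last R \<in> X"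
  obtains Q y where "path_in E (S - X) Q" "hd Q = hd R" "set Q \<subseteq> set R"
    "(last Q, y) \<in> E" "y \<in> X" "y \<in> set R"
  using assms
proof (induction R arbitrary: thesis)
  case Nil
  then show ?case by (simp add: path_in_iff)
next
  case (Cons a R)
  then have "R \<noteq> []" "path_in E S R" "(a, hd R) \<in> E" "a \<in> S"
    by (auto simp: path_in_Cons)
  show ?case
  proof (cases "hd R \<in> X")
    case True
    then show ?thesis
      using Cons.prems \<open>R \<noteq> []\<close> \<open>(a, hd R) \<in> E\<close> \<open>a \<in> S\<close> by (intro Cons.prems(1)[of "[a]"]) auto
  next
    case False
    obtain Q y where Q: "path_in E (S - X) Q" "hd Q = hd R" "set Q \<subseteq> set R"
      "(last Q, y) \<in> E" "y \<in> X" "y \<in> set R"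
      using Cons.IH[OF _ \<open>path_in E S R\<close> False] Cons.prems(4) \<open>R \<noteq> []\<close> by auto
    have "a \<notin> set Q"
      using Q(3) Cons.prems(2) unfolding path_in_iff by auto
    moreover have "Q \<noteq> []"
      using Q(1) by (simp add: path_in_iff)
    ultimately show ?thesis
      using Q Cons.prems \<open>(a, hd R) \<in> E\<close> \<open>a \<in> S\<close>
      by (intro Cons.prems(1)[of "a # Q" y]) (auto simp: path_in_Cons)
  qed
qed

lemma five_le_lengthE:
  assumes "5 \<le> length xs"
  obtains x0 x1 x2 ys y1 y2 where "xs = x0 # x1 # x2 # ys @ [y1, y2]"
proof -
  obtain x0 x1 x2 zs where "xs = x0 # x1 # x2 # zs" "2 \<le> length zs"
    using assms by (auto simp: numeral_eq_Suc Suc_le_length_iff)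
  moreover obtain ys y1 y2 where "zs = ys @ [y1, y2]"
    using \<open>2 \<le> length zs\<close> by (cases zs rule: rev_cases; cases "butlast zs" rule: rev_cases) auto
  ultimately show thesis
    using that by blast
qed

(* The path p0 is needed because Max of the empty set is unspecified. *)
lemma longest_path_length_ge_iff:
  assumes "finite W" "path_in F W p0" "hd p0 = s" "last p0 = t"
  shows "k \<le> longest_path_length F W s t \<longleftrightarrow>
    (\<exists>p. path_in F W p \<and> hd p = s \<and> last p = t \<and> k \<le> length p - 1)"
proof -
  let ?L = "{length p - 1 | p. path_in F W p \<and> hd p = s \<and> last p = t}"
  have "length p - 1 \<le> card W" if "path_in F W p" for p
  proof -
    have "length p = card (set p)" "set p \<subseteq> W"
      using that distinct_card[symmetric] by (auto simp: path_in_iff)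
    then show ?thesis
      using card_mono[OF assms(1), of "set p"] by linarith
  qed
  then have "?L \<subseteq> {..card W}"
    by blast
  then have "finite ?L"
    using finite_subset by blast
  moreover have "?L \<noteq> {}"
    using assms(2-4) by blast
  ultimately show ?thesis
    unfolding longest_path_length_def Max_ge_iff[OF \<open>finite ?L\<close> \<open>?L \<noteq> {}\<close>] by blast
qed

section \<open>Every vertex lies on an s-t path\<close>

lemma st_path_splice:
  assumes "sym E"
    and p: "path_in E V p" "hd p = s" "last p = t" "v \<in> set p" "y \<in> set p" "y \<noteq> v"
    and Q: "path_in E (V - set p) Q" "(v, hd Q) \<in> E" "(last Q, y) \<in> E"
  shows "\<exists>p'. path_in E V p' \<and> hd p' = s \<and> last p' = t \<and> set Q \<subseteq> set p'"
proof -
  obtain p1 p2 where p12: "p = p1 @ v # p2"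
    using split_list p(4) by metis
  consider "y \<in> set p2" | "y \<in> set p1"
    using p(5,6) p12 by auto
  then show ?thesis
  proof cases
    case 1
    then obtain q1 q2 where q: "p2 = q1 @ y # q2"
      using split_list by metis
    have "path_in E V (p1 @ v # Q @ y # q2)"
      using path_in_reroute[of E V p1 v q1 y q2 Q] p(1) Q unfolding p12 q by simp
    moreover have "hd (p1 @ v # Q @ y # q2) = s"
      using p(2) unfolding p12 by (simp add: hd_append split: if_split_asm)
    moreover have "last (p1 @ v # Q @ y # q2) = t"
      using p(3) unfolding p12 q by simp
    moreover have "set Q \<subseteq> set (p1 @ v # Q @ y # q2)"
      by auto
    ultimately show ?thesis
      by blast
  next
    case 2
    then obtain q1 q2 where q: "p1 = q1 @ y # q2"
      using split_list by metis
    have "path_in E V (rev p)"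
      using p(1) path_in_rev[OF assms(1)] by blast
    moreover have "rev p = rev p2 @ v # rev q2 @ y # rev q1"
      unfolding p12 q by simp
    ultimately have "path_in E V (rev p2 @ v # Q @ y # rev q1)"
      using path_in_reroute[of E V "rev p2" v "rev q2" y "rev q1" Q] Q by (metis set_rev)
    then have "path_in E V (q1 @ y # rev Q @ v # p2)"
      using path_in_rev[OF assms(1), of V "q1 @ y # rev Q @ v # p2"] by simp
    moreover have "hd (q1 @ y # rev Q @ v # p2) = s"
      using p(2) unfolding p12 q by (simp add: hd_append split: if_split_asm)
    moreover have "last (q1 @ y # rev Q @ v # p2) = t"
      using p(3) unfolding p12 by simp
    moreover have "set Q \<subseteq> set (q1 @ y # rev Q @ v # p2)"
      by auto
    ultimately show ?thesis
      by blast
  qed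
qed

lemma st_path_extend:
  assumes "sym E" "\<forall>v\<in>V. connected_on E (V - {v})" "s \<noteq> t"
    and p: "path_in E V p" "hd p = s" "last p = t"
    and "v \<in> set p" "(u, v) \<in> E" "u \<in> V" "u \<notin> set p"
  shows "\<exists>p'. path_in E V p' \<and> hd p' = s \<and> last p' = t \<and> u \<in> set p'"
proof -
  have "s \<in> set p" "t \<in> set p"
    using p by (auto simp: path_in_iff)
  then obtain z where z: "z \<in> set p" "z \<noteq> v"
    using \<open>s \<noteq> t\<close> by metis
  have "set p \<subseteq> V"
    using p(1) by (simp add: path_in_iff)
  then obtain R where R: "path_in E (V - {v}) R" "hd R = u" "last R = z"
    using connected_on_path_in assms(2,7,9,10) z by (metis Diff_iff singletonD subsetD)
  obtain Q y where Q: "path_in E (V - {v} - set p) Q" "hd Q = u" "(last Q, y) \<in> E"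
    and y: "y \<in> set p" "y \<in> set R"
    using path_in_first_hit[OF R(1), of "set p"] R(2,3) z(1) assms(10) by metis
  have "y \<noteq> v"
    using y(2) R(1) by (auto simp: path_in_iff)
  moreover have "path_in E (V - set p) Q"
    using Q(1) by (rule path_in_mono) auto
  moreover have "(v, hd Q) \<in> E"
    using assms(1,8) Q(2) by (auto simp: sym_def)
  moreover have "u \<in> set Q"
    using Q(1,2) by (auto simp: path_in_iff)
  ultimately show ?thesis
    using st_path_splice[OF assms(1) p assms(7) y(1)] Q(3) by blast
qed

lemma st_path_through_vertex:
  assumes "sym E" "connected_on E V" "\<forall>v\<in>V. connected_on E (V - {v})"
    and "s \<in> V" "t \<in> V" "s \<noteq> t" "x \<in> V"
  shows "\<exists>p. path_in E V p \<and> hd p = s \<and> last p = t \<and> x \<in> set p"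
proof -
  have "\<exists>p. path_in E V p \<and> hd p = s \<and> last p = t \<and> hd R \<in> set p"
    if "path_in E V R" "last R = s" for R
    using that
  proof (induction R)
    case Nil
    then show ?case by (simp add: path_in_iff)
  next
    case (Cons u R)
    show ?case
    proof (cases "R = []")
      case True
      then show ?thesis
        using connected_on_path_in[OF assms(2,4,5)] Cons.prems(2) by (auto simp: path_in_iff)
    next
      case False
      then have "path_in E V R" "(u, hd R) \<in> E" "u \<in> V"
        using Cons.prems(1) by (auto simp: path_in_Cons)
      then obtain p where p: "path_in E V p" "hd p = s" "last p = t" "hd R \<in> set p"
        using Cons.IH Cons.prems(2) False by auto
      show ?thesis
      proof (cases "u \<in> set p")
        case True
        then show ?thesis using p by auto
      next
        case False
        then show ?thesis
          using st_path_extend[OF assms(1,3,6) p \<open>(u, hd R) \<in> E\<close> \<open>u \<in> V\<close>] by simp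
      qed
    qed
  qed
  moreover obtain R where "path_in E V R" "hd R = x" "last R = s"
    using connected_on_path_in[OF assms(2,7,4)] by blast
  ultimately show ?thesis
    by blast
qed

section \<open>Subdivisions of K4\<close>

lemma has_K4_subdivision_interiorsI:
  fixes b :: "nat \<Rightarrow> 'a" and P :: "nat \<Rightarrow> nat \<Rightarrow> 'a list" and I :: "nat \<Rightarrow> nat \<Rightarrow> 'a set"
  assumes inj: "inj_on b {0..<4}" and branch_V: "b ` {0..<4} \<subseteq> V"
    and paths: "\<And>i j. i < j \<Longrightarrow> j < 4 \<Longrightarrow>
      path_in E V (P i j) \<and> hd (P i j) = b i \<and> last (P i j) = b j \<and>
      set (P i j) \<subseteq> {b i, b j} \<union> I i j \<and> I i j \<inter> b ` {0..<4} = {}"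
    and I_disj: "\<And>i j k l. i < j \<Longrightarrow> j < 4 \<Longrightarrow> k < l \<Longrightarrow> l < 4 \<Longrightarrow> (i, j) \<noteq> (k, l) \<Longrightarrow>
      I i j \<inter> I k l = {}"
  shows "has_K4_subdivision V E"
proof -
  define B where "B = b ` {0..<4}"
  have b_B: "b i \<in> B" if "i < 4" for i
    using that by (simp add: B_def)
  have ends: "set (P i j) \<inter> B = {b i, b j}" if "i < j" "j < 4" for i j
  proof -
    have "path_in E V (P i j)" "hd (P i j) = b i" "last (P i j) = b j"
      and sub: "set (P i j) \<subseteq> {b i, b j} \<union> I i j" "I i j \<inter> B = {}"
      using paths[OF that] by (simp_all add: B_def)
    then have "b i \<in> set (P i j)" "b j \<in> set (P i j)"
      by (metis hd_in_set path_in_iff, metis last_in_set path_in_iff)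
    then show ?thesis
      using sub b_B that by auto
  qed
  have crossing: "set (P i j) \<inter> set (P k l) \<subseteq> B"
    if "i < j" "j < 4" "k < l" "l < 4" "(i, j) \<noteq> (k, l)" for i j k l
  proof -
    have "set (P i j) \<subseteq> {b i, b j} \<union> I i j" "set (P k l) \<subseteq> {b k, b l} \<union> I k l"
      using paths that by simp_all
    moreover have "{b i, b j, b k, b l} \<subseteq> B"
      using b_B that by simp
    ultimately show ?thesis
      using I_disj[OF that] by blast
  qed
  show ?thesis
    unfolding has_K4_subdivision_def
    using inj branch_V paths ends crossing unfolding B_def[symmetric]
    by (intro exI[of _ b] exI[of _ P]) (simp add: B_def[symmetric])
qed

lemma has_K4_subdivisionI:
  assumes dist: "distinct [a, b, c, d]"
    and pab: "path_in E V pab" "hd pab = a" "last pab = b" "set pab \<subseteq> {a, b} \<union> Iab"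
    and pac: "path_in E V pac" "hd pac = a" "last pac = c" "set pac \<subseteq> {a, c} \<union> Iac"
    and pad: "path_in E V pad" "hd pad = a" "last pad = d" "set pad \<subseteq> {a, d} \<union> Iad"
    and pbc: "path_in E V pbc" "hd pbc = b" "last pbc = c" "set pbc \<subseteq> {b, c} \<union> Ibc"
    and pbd: "path_in E V pbd" "hd pbd = b" "last pbd = d" "set pbd \<subseteq> {b, d} \<union> Ibd"
    and pcd: "path_in E V pcd" "hd pcd = c" "last pcd = d" "set pcd \<subseteq> {c, d} \<union> Icd"
    and disj: "Iab \<inter> Iac = {}" "Iab \<inter> Iad = {}" "Iab \<inter> Ibc = {}" "Iab \<inter> Ibd = {}" "Iab \<inter> Icd = {}"
      "Iac \<inter> Iad = {}" "Iac \<inter> Ibc = {}" "Iac \<inter> Ibd = {}" "Iac \<inter> Icd = {}"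
      "Iad \<inter> Ibc = {}" "Iad \<inter> Ibd = {}" "Iad \<inter> Icd = {}"
      "Ibc \<inter> Ibd = {}" "Ibc \<inter> Icd = {}" "Ibd \<inter> Icd = {}"
    and branch: "Iab \<inter> {a, b, c, d} = {}" "Iac \<inter> {a, b, c, d} = {}" "Iad \<inter> {a, b, c, d} = {}"
      "Ibc \<inter> {a, b, c, d} = {}" "Ibd \<inter> {a, b, c, d} = {}" "Icd \<inter> {a, b, c, d} = {}"
  shows "has_K4_subdivision V E"
proof -
  define bv where "bv i = [a, b, c, d] ! i" for i :: nat
  \<comment> \<open>\<open>idx\<close> numbers the pairs (0,1), (0,2), (0,3), (1,2), (1,3), (2,3) as 0, ..., 5.\<close>
  define idx where "idx i j = (if i = 0 then j - 1 else i + j)" for i j :: nat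
  define P where "P i j = [pab, pac, pad, pbc, pbd, pcd] ! idx i j" for i j
  define I where "I i j = [Iab, Iac, Iad, Ibc, Ibd, Icd] ! idx i j" for i j
  have pairs: "(i, j) \<in> {(0, 1), (0, 2), (0, 3), (1, 2), (1, 3), (2, 3)}" if "i < j" "j < 4" for i j :: nat
    using that by auto
  have "{0..<4} = {0, 1, 2, 3 :: nat}"
    by auto
  then have B: "bv ` {0..<4} = {a, b, c, d}"
    by (simp add: bv_def)
  show ?thesis
  proof (rule has_K4_subdivision_interiorsI[where b = bv and P = P and I = I])
    show "inj_on bv {0..<4}"
      using dist by (auto simp: inj_on_def bv_def less_Suc_eq numeral_eq_Suc)
    show "bv ` {0..<4} \<subseteq> V"
      using B pab(1-3) pcd(1-3) by (auto simp: path_in_iff)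
  next
    fix i j :: nat
    assume ij: "i < j" "j < 4"
    then show "path_in E V (P i j) \<and> hd (P i j) = bv i \<and> last (P i j) = bv j \<and>
        set (P i j) \<subseteq> {bv i, bv j} \<union> I i j \<and> I i j \<inter> bv ` {0..<4} = {}"
      using pairs[OF ij] pab pac pad pbc pbd pcd branch unfolding B by (auto simp: P_def I_def idx_def bv_def)
  next
    fix i j k l :: nat
    assume "i < j" "j < 4" "k < l" "l < 4" "(i, j) \<noteq> (k, l)"
    then show "I i j \<inter> I k l = {}"
      using pairs[of i j] pairs[of k l] disj disj[THEN Int_commute[THEN trans]]
      by (auto simp: I_def idx_def)
  qed
qed

lemma K4_of_crossing_chords:
  assumes "sym E"
    and p: "path_in E V (s # p1 @ a # p2 @ b # p3 @ [t])"
    and q: "path_in E V q" "hd q = s" "last q = t" "set q \<inter> set (p1 @ a # p2 @ b # p3) = {}"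
    and "(a, t) \<in> E" "(b, s) \<in> E"
  shows "has_K4_subdivision V E"
proof -
  have dist: "distinct (s # p1 @ a # p2 @ b # p3 @ [t])" and V: "{s, a, b, t} \<subseteq> V"
    using p by (auto simp: path_in_iff)
  have "path_in E V (s # p1 @ [a])"
    using path_in_infix[of E V "[]" "s # p1 @ [a]"] p by simp
  moreover have "path_in E V (a # p2 @ [b])"
    using path_in_infix[of E V "s # p1" "a # p2 @ [b]"] p by simp
  moreover have "path_in E V (b # p3 @ [t])"
    using path_in_infix[of E V "s # p1 @ a # p2" "b # p3 @ [t]" "[]"] p by simp
  moreover have "path_in E V [s, b]" "path_in E V [a, t]"
    using V dist \<open>(a, t) \<in> E\<close> \<open>(b, s) \<in> E\<close> \<open>sym E\<close> by (auto simp: path_in_Cons sym_def)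
  moreover have "s \<in> set q" "t \<in> set q"
    using q(1-3) hd_in_set last_in_set by (auto simp: path_in_iff)
  ultimately show ?thesis
    using dist q
    by (intro has_K4_subdivisionI[where a = s and b = a and c = b and d = t and
        pab = "s # p1 @ [a]" and Iab = "set p1" and pac = "[s, b]" and Iac = "{}" and
        pad = q and Iad = "set q - {s, t}" and pbc = "a # p2 @ [b]" and Ibc = "set p2" and
        pbd = "[a, t]" and Ibd = "{}" and pcd = "b # p3 @ [t]" and Icd = "set p3"]) auto
qed

lemma K4_of_pole_chord:
  assumes "sym E"
    and p: "path_in E V (s # v1 # v2 # r1 @ y # r2)" "last (y # r2) = t"
    and q: "path_in E V q" "hd q = s" "last q = t" "set q \<inter> set (v1 # v2 # r1 @ y # r2) \<subseteq> {t}"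
    and Q: "path_in E V (v1 # Q @ [y])" "set Q \<inter> (set q \<union> set (v2 # r1 @ y # r2)) = {}"
    and "(v2, s) \<in> E"
  shows "has_K4_subdivision V E"
proof -
  \<comment> \<open>Branch vertices s, v1, v2, y; the s-y path follows q to t and then p backwards to y.\<close>
  have dist: "distinct (s # v1 # v2 # r1 @ y # r2)" "distinct (v1 # Q @ [y])"
    and V: "{s, v1, v2} \<subseteq> V"
    using p(1) Q(1) by (auto simp: path_in_iff)
  have "s \<in> set q" "t \<in> set q"
    using q(1-3) hd_in_set last_in_set by (auto simp: path_in_iff)
  have "t \<in> set (y # r2)"
    using p(2) last_in_set by blast
  have "path_in E V (v2 # r1 @ [y])"
    using path_in_infix[of E V "[s, v1]" "v2 # r1 @ [y]"] p(1) by simp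
  moreover have "path_in E V (q @ tl (rev (y # r2)))"
  proof (rule path_in_join)
    have "path_in E V (y # r2)"
      using path_in_infix[of E V "s # v1 # v2 # r1" "y # r2" "[]"] p(1) by simp
    then show "path_in E V (rev (y # r2))"
      using path_in_rev[OF \<open>sym E\<close>] by blast
    show "last q = hd (rev (y # r2))"
      using p(2) q(3) by (metis hd_rev)
    then show "set q \<inter> set (rev (y # r2)) = {hd (rev (y # r2))}"
      using q(4) \<open>t \<in> set q\<close> \<open>t \<in> set (y # r2)\<close> q(3) by auto
  qed (rule q(1))
  moreover have "hd (q @ tl (rev (y # r2))) = s"
    using q(1,2) by (simp add: path_in_iff)
  moreover have "last (q @ tl (rev (y # r2))) = y"
    using p(2) q(3) by (cases r2 rule: rev_cases) auto
  moreover have "set (q @ tl (rev (y # r2))) \<subseteq> set q \<union> set (y # r2)"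
    using list.set_sel(2)[of "rev (y # r2)"] by auto
  moreover have "path_in E V [s, v1]" "path_in E V [s, v2]" "path_in E V [v1, v2]"
    using V dist p(1) \<open>(v2, s) \<in> E\<close> \<open>sym E\<close> by (auto simp: path_in_Cons sym_def)
  ultimately show ?thesis
    using dist q Q(1) Q(2) \<open>s \<in> set q\<close> \<open>t \<in> set (y # r2)\<close>
    by (intro has_K4_subdivisionI[where a = s and b = v1 and c = v2 and d = y and
        pab = "[s, v1]" and Iab = "{}" and pac = "[s, v2]" and Iac = "{}" and
        pad = "q @ tl (rev (y # r2))" and Iad = "(set q \<union> set r2) - {s, y}" and
        pbc = "[v1, v2]" and Ibc = "{}" and pbd = "v1 # Q @ [y]" and Ibd = "set Q" and
        pcd = "v2 # r1 @ [y]" and Icd = "set r1"]) auto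
qed

section \<open>Components with respect to a separation pair\<close>

lemma path_in_conn_component_iff:
  assumes "sym E" "conn_component E S C" "path_in E S p" "z \<in> set p"
  shows "z \<in> C \<longleftrightarrow> hd p \<in> C"
  using assms(3,4)
proof (induction p)
  case Nil
  then show ?case by simp
next
  case (Cons a p)
  show ?case
  proof (cases "p = []")
    case True
    then show ?thesis using Cons.prems by simp
  next
    case False
    then have "path_in E S p" "(a, hd p) \<in> E" "a \<in> S"
      using Cons.prems(1) by (auto simp: path_in_Cons)
    moreover have "hd p \<in> S"
      using \<open>path_in E S p\<close> False by (auto simp: path_in_iff)
    moreover have "(hd p, a) \<in> E"
      using \<open>(a, hd p) \<in> E\<close> assms(1) by (auto simp: sym_def)
    ultimately have "a \<in> C \<longleftrightarrow> hd p \<in> C"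
      using assms(2) unfolding conn_component_def by blast
    then show ?thesis
      using Cons.IH[OF \<open>path_in E S p\<close>] Cons.prems(2) by auto
  qed
qed

lemma st_path_in_conn_component:
  assumes "sym E" "conn_component E (V - {s, t}) C"
    and "path_in E V p" "hd p = s" "last p = t" "x \<in> set p" "x \<in> C"
  shows "set p \<subseteq> {s, t} \<union> C"
proof -
  have "x \<noteq> s" "x \<noteq> t"
    using assms(2,7) by (auto simp: conn_component_def)
  then obtain m where p: "p = s # m @ [t]" and "x \<in> set m" and m: "path_in E (V - {s, t}) m"
    using path_in_interior assms(3-6) by metis
  have "z \<in> C" if "z \<in> set m" for z
    using path_in_conn_component_iff[OF assms(1,2) m] that \<open>x \<in> set m\<close> assms(7) by blast
  then show ?thesis
    using p by auto
qed

lemma biconnectedD: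
  assumes "biconnected V E"
  shows "finite V" "sym E" "connected_on E V" "\<forall>v\<in>V. connected_on E (V - {v})"
  using assms unfolding biconnected_def graph_def by auto

lemma st_path_through_conn_component:
  assumes "biconnected V E" "s \<in> V" "t \<in> V" "s \<noteq> t" "conn_component E (V - {s, t}) C" "x \<in> C"
  shows "\<exists>p. path_in E V p \<and> hd p = s \<and> last p = t \<and> set p \<subseteq> {s, t} \<union> C \<and> x \<in> set p"
proof -
  have "x \<in> V"
    using assms(5,6) by (auto simp: conn_component_def)
  then obtain p where "path_in E V p" "hd p = s" "last p = t" "x \<in> set p"
    using st_path_through_vertex biconnectedD[OF assms(1)] assms(2-4) by metis
  then show ?thesis
    using st_path_in_conn_component biconnectedD(2)[OF assms(1)] assms(5,6) by metis
qed

lemma st_path_avoiding_conn_component: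
  assumes "biconnected V E" "separation_pair V E s t" "conn_component E (V - {s, t}) C"
  shows "\<exists>q. path_in E V q \<and> hd q = s \<and> last q = t \<and> set q \<inter> C = {}"
proof -
  have st: "s \<in> V" "t \<in> V" "s \<noteq> t" and "\<not> connected_on E (V - {s, t})"
    using assms(2) by (auto simp: separation_pair_def)
  moreover have "C \<subseteq> V - {s, t}" "connected_on E C"
    using assms(3) by (auto simp: conn_component_def)
  ultimately have "C \<noteq> V - {s, t}"
    by auto
  then obtain x where x: "x \<in> V - {s, t}" "x \<notin> C"
    using \<open>C \<subseteq> V - {s, t}\<close> by blast
  then obtain q where q: "path_in E V q" "hd q = s" "last q = t" "x \<in> set q"
    using st_path_through_vertex biconnectedD[OF assms(1)] st by (metis DiffD1)
  have "set q \<inter> C = {}"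
  proof (rule ccontr)
    assume "set q \<inter> C \<noteq> {}"
    then have "set q \<subseteq> {s, t} \<union> C"
      using st_path_in_conn_component[OF biconnectedD(2)[OF assms(1)] assms(3) q(1-3)] by blast
    then show False
      using x q(4) by auto
  qed
  then show ?thesis
    using q by blast
qed

lemma K4_of_pole_chord_in_component:
  assumes "sym E" "\<forall>x y. \<not> transitive_edge V E x y" "conn_component E (V - {s, t}) C"
    and p: "path_in E V (s # v1 # v2 # r @ [t])" "set (v1 # v2 # r) \<subseteq> C"
    and q: "path_in E V q" "hd q = s" "last q = t" "set q \<inter> C = {}"
    and "(v2, s) \<in> E"
  shows "has_K4_subdivision V E"
proof -
  have dist: "distinct (s # v1 # v2 # r @ [t])" and V: "set (s # v1 # v2 # r @ [t]) \<subseteq> V"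
    using p(1) by (auto simp: path_in_iff)
  have "(s, v2) \<in> E"
    using \<open>(v2, s) \<in> E\<close> \<open>sym E\<close> by (auto simp: sym_def)
  then have "connected_on E (V - {s, v2})"
    using assms(2) V dist unfolding transitive_edge_def separation_pair_def by auto
  moreover have "v1 \<in> V - {s, v2}" "t \<in> V - {s, v2}"
    using V dist by auto
  ultimately obtain R where R: "path_in E (V - {s, v2}) R" "hd R = v1" "last R = t"
    using connected_on_path_in by metis
  obtain Q0 y where Q0: "path_in E (V - {s, v2} - set (r @ [t])) Q0" "hd Q0 = v1"
    "(last Q0, y) \<in> E" "y \<in> set (r @ [t])"
  proof (rule path_in_first_hit[OF R(1)])
    show "hd R \<notin> set (r @ [t])" "last R \<in> set (r @ [t])"
      using R(2,3) dist by auto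
  qed (use R(2) in blast)
  \<comment> \<open>Q0 avoids t, which lies on the tail of p; hence it stays in C and misses q.\<close>
  have "path_in E (V - {s, t}) Q0"
    using Q0(1) by (rule path_in_mono) auto
  then have "set Q0 \<subseteq> C"
    using path_in_conn_component_iff[OF \<open>sym E\<close> assms(3)] Q0(2) p(2) by auto
  obtain Q where Q: "Q0 = v1 # Q"
    using Q0(1,2) by (cases Q0) (auto simp: path_in_iff)
  obtain r1 r2 where r: "r @ [t] = r1 @ y # r2"
    using split_list Q0(4) by metis
  have "path_in E V (Q0 @ [y])"
    unfolding path_in_append using Q0 V path_in_mono[OF Q0(1)] by (auto simp: path_in_iff)
  then have "path_in E V (v1 # Q @ [y])"
    using Q by simp
  moreover have "last (y # r2) = t"
    using r by (metis last_appendR last_snoc list.distinct(1))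
  moreover have "set Q \<inter> (set q \<union> set (v2 # r1 @ y # r2)) = {}"
    using Q0(1) Q \<open>set Q0 \<subseteq> C\<close> q(4) r by (auto simp: path_in_iff)
  moreover have "set q \<inter> set (v1 # v2 # r1 @ y # r2) \<subseteq> {t}"
  proof -
    have "set (r1 @ y # r2) = insert t (set r)"
      using arg_cong[OF r, of set] by simp
    then show ?thesis
      using p(2) q(4) by auto
  qed
  ultimately show ?thesis
    using K4_of_pole_chord[OF \<open>sym E\<close>, of V s v1 v2 r1 y r2 t q Q] p(1) q(1-3) r \<open>(v2, s) \<in> E\<close>
    by simp
qed

lemma no_pole_chords_in_component:
  assumes "sym E" "\<forall>x y. \<not> transitive_edge V E x y" "\<not> has_K4_subdivision V E"
    and C: "conn_component E (V - {s, t}) C"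
    and q: "path_in E V q" "hd q = s" "last q = t" "set q \<inter> C = {}"
  shows "path_in E V (s # v1 # v2 # r @ [t]) \<Longrightarrow> set (v1 # v2 # r) \<subseteq> C \<Longrightarrow> (v2, s) \<notin> E"
    and "path_in E V (t # v1 # v2 # r @ [s]) \<Longrightarrow> set (v1 # v2 # r) \<subseteq> C \<Longrightarrow> (v2, t) \<notin> E"
proof -
  show "(v2, s) \<notin> E" if "path_in E V (s # v1 # v2 # r @ [t])" "set (v1 # v2 # r) \<subseteq> C"
    using K4_of_pole_chord_in_component[OF assms(1,2) C that q] assms(3) by blast
  have "conn_component E (V - {t, s}) C"
    using C by (simp add: insert_commute)
  moreover have "path_in E V (rev q)" "hd (rev q) = t" "last (rev q) = s" "set (rev q) \<inter> C = {}"
    using q path_in_rev[OF assms(1)] by (auto simp: hd_rev last_rev)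
  ultimately show "(v2, t) \<notin> E" if "path_in E V (t # v1 # v2 # r @ [s])" "set (v1 # v2 # r) \<subseteq> C"
    using K4_of_pole_chord_in_component[OF assms(1,2) _ that] assms(3) by blast
qed

lemma light_component_st_path_length:
  assumes "sym E" "\<forall>x y. \<not> transitive_edge V E x y" "\<not> has_K4_subdivision V E"
    and C: "conn_component E (V - {s, t}) C" "\<forall>v\<in>C. (v, s) \<in> E \<or> (v, t) \<in> E"
    and q: "path_in E V q" "hd q = s" "last q = t" "set q \<inter> C = {}"
    and p: "path_in E V p" "hd p = s" "last p = t" "set p \<subseteq> {s, t} \<union> C"
  shows "length p \<le> 4"
proof (rule ccontr)
  assume "\<not> length p \<le> 4"
  then obtain x0 v1 a r0 w1 w where "p = x0 # v1 # a # r0 @ [w1, w]"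
    using five_le_lengthE[of p] by fastforce
  then have p_eq: "p = s # v1 # a # r0 @ [w1, t]"
    using p(2,3) by simp
  have interior: "set (v1 # a # r0 @ [w1]) \<subseteq> C"
    using p(1,4) unfolding p_eq by (auto simp: path_in_iff)
  note no_chord = no_pole_chords_in_component[OF assms(1-3) C(1) q]
  have "path_in E V (rev p)"
    using p(1) path_in_rev[OF assms(1)] by blast
  have "(a, s) \<notin> E"
    using no_chord(1)[of v1 a "r0 @ [w1]"] p(1) interior unfolding p_eq by simp
  then have "(a, t) \<in> E"
    using C(2) interior by auto
  show False
  proof (cases r0 rule: rev_cases)
    case Nil
    then show False
      using no_chord(2)[of w1 a "[v1]"] \<open>path_in E V (rev p)\<close> interior \<open>(a, t) \<in> E\<close>
      unfolding p_eq by simp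
  next
    case (snoc m b)
    then have "(b, t) \<notin> E"
      using no_chord(2)[of w1 b "rev m @ [a, v1]"] \<open>path_in E V (rev p)\<close> interior
      unfolding p_eq by simp
    then have "(b, s) \<in> E"
      using C(2) interior snoc by auto
    moreover have "path_in E V (s # [v1] @ a # m @ b # [w1] @ [t])"
      using p(1) unfolding p_eq snoc by simp
    moreover have "set q \<inter> set ([v1] @ a # m @ b # [w1]) = {}"
      using q(4) interior snoc by auto
    ultimately show False
      using K4_of_crossing_chords[OF assms(1) _ q(1-3)] \<open>(a, t) \<in> E\<close> assms(3) by blast
  qed
qed

lemma heavy_component_long_st_path:
  assumes "biconnected V E" "s \<in> V" "t \<in> V" "s \<noteq> t" "conn_component E (V - {s, t}) C"
    and "heavy E s t ({s, t} \<union> C)"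
  shows "\<exists>p. path_in E V p \<and> hd p = s \<and> last p = t \<and> set p \<subseteq> {s, t} \<union> C \<and> 5 \<le> length p"
proof -
  obtain x where x: "x \<in> C" "(x, s) \<notin> E" "(x, t) \<notin> E"
    using assms(6) unfolding heavy_def by auto
  then obtain p where p: "path_in E V p" "hd p = s" "last p = t" "set p \<subseteq> {s, t} \<union> C" "x \<in> set p"
    using st_path_through_conn_component[OF assms(1-5)] by metis
  moreover have "x \<notin> {s, t}"
    using assms(5) x(1) by (auto simp: conn_component_def)
  ultimately have "5 \<le> length p"
    using length_path_in_through_non_neighbour[OF biconnectedD(2)[OF assms(1)]] x(2,3) by metis
  then show ?thesis
    using p by blast
qed

lemma long_st_path_heavy_component:
  assumes "series_parallel V E" "\<forall>x y. \<not> transitive_edge V E x y" "separation_pair V E s t"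
    and C: "conn_component E (V - {s, t}) C"
    and p: "path_in E V p" "hd p = s" "last p = t" "set p \<subseteq> {s, t} \<union> C" "5 \<le> length p"
  shows "heavy E s t ({s, t} \<union> C)"
proof (rule ccontr)
  assume "\<not> heavy E s t ({s, t} \<union> C)"
  then have "\<forall>v\<in>C. (v, s) \<in> E \<or> (v, t) \<in> E"
    using C unfolding heavy_def by (auto simp: conn_component_def)
  moreover have bic: "biconnected V E" and "\<not> has_K4_subdivision V E"
    using assms(1) by (auto simp: series_parallel_def)
  moreover obtain q where "path_in E V q" "hd q = s" "last q = t" "set q \<inter> C = {}"
    using st_path_avoiding_conn_component[OF bic assms(3) C] by blast
  ultimately have "length p \<le> 4"
    using light_component_st_path_length[OF biconnectedD(2)[OF bic] assms(2) _ C] p(1-4) by blast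
  then show False
    using p(5) by simp
qed

theorem mainTheorem7:
  fixes V :: "'a set" and E :: "('a \<times> 'a) set" and s t :: 'a and W :: "'a set"
  assumes "series_parallel V E"
    and "\<forall>x y. \<not> transitive_edge V E x y"
    and "separation_pair V E s t"
    and "component V E s t W"
  shows "heavy E s t W \<longleftrightarrow> longest_path_length (E \<inter> (W \<times> W)) W s t \<ge> 4"
proof -
  have bic: "biconnected V E"
    using assms(1) by (simp add: series_parallel_def)
  have st: "s \<in> V" "t \<in> V" "s \<noteq> t"
    using assms(3) by (auto simp: separation_pair_def)
  obtain C where C: "conn_component E (V - {s, t}) C" and W: "W = {s, t} \<union> C"
    using assms(4) by (auto simp: component_def)
  have "W \<subseteq> V"
    using C W st by (auto simp: conn_component_def)
  then have paths_W: "path_in (E \<inter> W \<times> W) W p \<longleftrightarrow> path_in E V p \<and> set p \<subseteq> W" for p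
    by (simp add: path_in_Int_Times path_in_subset_iff)
  obtain c where "c \<in> C"
    using C by (auto simp: conn_component_def)
  then obtain p0 where "path_in (E \<inter> W \<times> W) W p0" "hd p0 = s" "last p0 = t"
    using st_path_through_conn_component[OF bic st C] W paths_W by metis
  moreover have "finite W"
    using \<open>W \<subseteq> V\<close> biconnectedD(1)[OF bic] finite_subset by blast
  moreover have "4 \<le> length p - 1 \<longleftrightarrow> 5 \<le> length p" for p :: "'a list"
    by linarith
  ultimately have "4 \<le> longest_path_length (E \<inter> W \<times> W) W s t \<longleftrightarrow>
      (\<exists>p. path_in E V p \<and> hd p = s \<and> last p = t \<and> set p \<subseteq> W \<and> 5 \<le> length p)"
    using longest_path_length_ge_iff[of W "E \<inter> W \<times> W" p0 s t 4] paths_W by (metis (no_types, lifting))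
  then show ?thesis
    using heavy_component_long_st_path[OF bic st C] long_st_path_heavy_component[OF assms(1-3) C]
    unfolding W by blast
qed

end
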